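(* Let $p$ be a prime and $3\le k\le p$. Then for every $n$ and every subset $S\subseteq\mathbb{F}_p^n$ with $|S|\ge p^{1+(1-\frac1k)n}$, the set $(S-S)\setminus\{0\}$ contains a non-trivial $k$-term arithmetic progression, i.e. elements $y,y+d,\dots,y+(k-1)d$ with $d\ne0$.
   Context: $S-S=\{x-y:x,y\in S\}$. *)

theory Defs
  imports Complex_Main "HOL-Computational_Algebra.Primes"
begin

text \<open>The vector space F_p^n is modelled as functions nat => int whose coordinates
  i < n lie in {0..<p} and whose coordinates i >= n are 0; arithmetic is coordinatewise mod p.\<close>

definition Fpn :: "nat \<Rightarrow> nat \<Rightarrow> (nat \<Rightarrow> int) set" where
  "Fpn p n = {x. (\<forall>i<n. 0 \<le> x i \<and> x i < int p) \<and> (\<forall>i. n \<le> i \<longrightarrow> x i = 0)}"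

definition vzero :: "nat \<Rightarrow> int" where
  "vzero = (\<lambda>_. 0)"

definition vadd :: "nat \<Rightarrow> nat \<Rightarrow> (nat \<Rightarrow> int) \<Rightarrow> (nat \<Rightarrow> int) \<Rightarrow> (nat \<Rightarrow> int)" where
  "vadd p n x y = (\<lambda>i. if i < n then (x i + y i) mod int p else 0)"

definition vsub :: "nat \<Rightarrow> nat \<Rightarrow> (nat \<Rightarrow> int) \<Rightarrow> (nat \<Rightarrow> int) \<Rightarrow> (nat \<Rightarrow> int)" where
  "vsub p n x y = (\<lambda>i. if i < n then (x i - y i) mod int p else 0)"

definition vscale :: "nat \<Rightarrow> nat \<Rightarrow> int \<Rightarrow> (nat \<Rightarrow> int) \<Rightarrow> (nat \<Rightarrow> int)" where
  "vscale p n c x = (\<lambda>i. if i < n then (c * x i) mod int p else 0)"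

definition diffset :: "nat \<Rightarrow> nat \<Rightarrow> (nat \<Rightarrow> int) set \<Rightarrow> (nat \<Rightarrow> int) set" where
  "diffset p n S = {vsub p n x y | x y. x \<in> S \<and> y \<in> S}"

end

theory Submission
  imports Defs "HOL-Library.FuncSet"
begin

(* Fix s in a large family F of k-tuples from S whose tuples all deviate in the same way from
   being arithmetic progressions, i.e. share the vectors t_j - t_0 - j (t_1 - t_0) mod p.  Then
   for every t in F the differences s_j - t_j form an arithmetic progression in S - S, and t is
   determined by its first term and common difference.  At most (k + 1) p^n such pairs are
   degenerate (difference 0, or some term 0), and by pigeonhole over the p^(n (k - 2)) possible
   deviations a family of more than (k + 1) p^n tuples exists once |S|^k > (k + 1) p^(n (k - 1)),
   which the density hypothesis guarantees. *)

definition vred :: "nat \<Rightarrow> nat \<Rightarrow> (nat \<Rightarrow> int) \<Rightarrow> nat \<Rightarrow> int" where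
  "vred p n f = (\<lambda>i. if i < n then f i mod int p else 0)"

lemma vred_eq_iff: "vred p n f = vred p n g \<longleftrightarrow> (\<forall>i<n. f i mod int p = g i mod int p)"
  by (auto simp: vred_def fun_eq_iff)

lemma vred_in_Fpn: "0 < p \<Longrightarrow> vred p n f \<in> Fpn p n"
  by (simp add: vred_def Fpn_def)

lemma vzero_in_Fpn: "0 < p \<Longrightarrow> vzero \<in> Fpn p n"
  by (simp add: vzero_def Fpn_def)

lemma vred_Fpn: "x \<in> Fpn p n \<Longrightarrow> vred p n x = x"
  by (auto simp: vred_def Fpn_def fun_eq_iff)

lemma vzero_eq_vred: "vzero = vred p n (\<lambda>_. 0)"
  by (simp add: vzero_def vred_def fun_eq_iff)

lemma vsub_eq_vred: "vsub p n x y = vred p n (\<lambda>i. x i - y i)"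
  by (simp add: vsub_def vred_def)

lemma vsub_in_Fpn: "0 < p \<Longrightarrow> vsub p n x y \<in> Fpn p n"
  by (simp add: vsub_eq_vred vred_in_Fpn)

lemma vscale_eq_vred: "vscale p n c x = vred p n (\<lambda>i. c * x i)"
  by (simp add: vscale_def vred_def)

lemma vadd_vscale_eq_vred: "vadd p n x (vscale p n c y) = vred p n (\<lambda>i. x i + c * y i)"
  by (simp add: vadd_def vscale_def vred_def fun_eq_iff mod_simps)

lemma vsub_left_cancel:
  assumes "y \<in> Fpn p n" "y' \<in> Fpn p n" "vsub p n x y = vsub p n x y'"
  shows "y = y'"
proof -
  have "y i mod int p = y' i mod int p" if "i < n" for i
  proof -
    have "(x i - y i) mod int p = (x i - y' i) mod int p"
      using assms(3) that unfolding vsub_eq_vred vred_eq_iff by blast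
    then have "(x i - (x i - y i)) mod int p = (x i - (x i - y' i)) mod int p"
      by (rule mod_diff_cong[OF refl])
    then show ?thesis by simp
  qed
  then have "vred p n y = vred p n y'"
    by (simp add: vred_eq_iff)
  then show ?thesis
    using assms(1,2) by (simp add: vred_Fpn)
qed

lemma finite_Fpn: "finite (Fpn p n)"
  and card_Fpn_le: "card (Fpn p n) \<le> p ^ n"
proof -
  define P where "P = PiE {..<n} (\<lambda>_. {0..<int p})"
  define extend where "extend = (\<lambda>f::nat \<Rightarrow> int. \<lambda>i. if i < n then f i else 0)"
  have "Fpn p n \<subseteq> extend ` P"
  proof
    fix x assume x: "x \<in> Fpn p n"
    then have "restrict x {..<n} \<in> P" and "x = extend (restrict x {..<n})"
      by (auto simp: Fpn_def P_def extend_def)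
    then show "x \<in> extend ` P" by blast
  qed
  moreover have "finite P" and "card P = p ^ n"
    by (simp_all add: P_def card_PiE finite_PiE)
  ultimately show fin: "finite (Fpn p n)"
    using finite_surj by blast
  have "card (Fpn p n) \<le> card (extend ` P)"
    using \<open>Fpn p n \<subseteq> extend ` P\<close> \<open>finite P\<close> by (intro card_mono) simp_all
  also have "\<dots> \<le> card P"
    using \<open>finite P\<close> by (rule card_image_le)
  finally show "card (Fpn p n) \<le> p ^ n"
    using \<open>card P = p ^ n\<close> by simp
qed

lemma card_zero_term_aps_le:
  assumes "0 < p"
  shows "card {(y, d) \<in> Fpn p n \<times> Fpn p n. vadd p n y (vscale p n c d) = vzero}
           \<le> card (Fpn p n)"
proof -
  have "{(y, d) \<in> Fpn p n \<times> Fpn p n. vadd p n y (vscale p n c d) = vzero}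
          \<subseteq> (\<lambda>d. (vscale p n (- c) d, d)) ` Fpn p n"
  proof clarify
    fix y d assume y: "y \<in> Fpn p n" and d: "d \<in> Fpn p n"
      and zero: "vadd p n y (vscale p n c d) = vzero"
    have "y i mod int p = (- c * d i) mod int p" if "i < n" for i
    proof -
      have "(y i + c * d i) mod int p = 0 mod int p"
        using zero that unfolding vadd_vscale_eq_vred vzero_eq_vred[of p n] vred_eq_iff by blast
      then have "((y i + c * d i) - c * d i) mod int p = (0 - c * d i) mod int p"
        by (rule mod_diff_cong[OF _ refl])
      then show ?thesis by simp
    qed
    then have "vred p n y = vred p n (\<lambda>i. - c * d i)"
      by (simp add: vred_eq_iff)
    then have "y = vscale p n (- c) d"
      using y by (simp add: vred_Fpn vscale_eq_vred)
    with d show "(y, d) \<in> (\<lambda>d. (vscale p n (- c) d, d)) ` Fpn p n" by blast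
  qed
  then show ?thesis
    by (meson card_image_le card_mono finite_Fpn finite_imageI order_trans)
qed

definition degenerate_aps :: "nat \<Rightarrow> nat \<Rightarrow> nat \<Rightarrow> ((nat \<Rightarrow> int) \<times> (nat \<Rightarrow> int)) set" where
  "degenerate_aps p n k = {(y, d) \<in> Fpn p n \<times> Fpn p n.
     d = vzero \<or> (\<exists>j<k. vadd p n y (vscale p n (int j) d) = vzero)}"

lemma card_degenerate_aps:
  assumes "0 < p"
  shows "card (degenerate_aps p n k) \<le> (k + 1) * card (Fpn p n)"
proof -
  define Z where "Z = (\<lambda>j. {(y, d) \<in> Fpn p n \<times> Fpn p n. vadd p n y (vscale p n (int j) d) = vzero})"
  have fin: "finite (Fpn p n \<times> Fpn p n)"
    by (simp add: finite_Fpn)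
  have "degenerate_aps p n k \<subseteq> Fpn p n \<times> {vzero} \<union> (\<Union>j<k. Z j)"
    by (auto simp: degenerate_aps_def Z_def)
  then have "card (degenerate_aps p n k) \<le> card (Fpn p n \<times> {vzero} \<union> (\<Union>j<k. Z j))"
    using fin by (intro card_mono finite_subset[OF _ fin]) (auto simp: Z_def vzero_in_Fpn assms)
  also have "\<dots> \<le> card (Fpn p n \<times> {vzero}) + card (\<Union>j<k. Z j)"
    by (rule card_Un_le)
  also have "\<dots> \<le> card (Fpn p n \<times> {vzero}) + (\<Sum>j<k. card (Z j))"
    by (intro add_left_mono card_UN_le) simp
  also have "\<dots> \<le> card (Fpn p n) + (\<Sum>j<k. card (Fpn p n))"
    using card_zero_term_aps_le[OF assms]
    by (intro add_mono sum_mono) (simp_all add: Z_def card_cartesian_product)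
  finally show ?thesis by simp
qed

definition ap_defect :: "nat \<Rightarrow> nat \<Rightarrow> (nat \<Rightarrow> nat \<Rightarrow> int) \<Rightarrow> nat \<Rightarrow> nat \<Rightarrow> int" where
  "ap_defect p n t j = vred p n (\<lambda>i. t j i - t 0 i - int j * (t 1 i - t 0 i))"

lemma ap_defect_0: "ap_defect p n t 0 = vzero"
  and ap_defect_1: "ap_defect p n t 1 = vzero"
  by (simp_all add: ap_defect_def vzero_eq_vred[of p n])

lemma vsub_eq_ap_if_ap_defect_eq:
  assumes "ap_defect p n s j = ap_defect p n t j"
  shows "vsub p n (s j) (t j) =
           vadd p n (vsub p n (s 0) (t 0))
             (vscale p n (int j) (vsub p n (vsub p n (s 1) (t 1)) (vsub p n (s 0) (t 0))))"
proof -
  have "(s j i - t j i) mod int p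
          = (s 0 i - t 0 i + int j * ((s 1 i - t 1 i - (s 0 i - t 0 i)) mod int p)) mod int p"
    if "i < n" for i
  proof -
    have "(s j i - s 0 i - int j * (s 1 i - s 0 i)) mod int p
            = (t j i - t 0 i - int j * (t 1 i - t 0 i)) mod int p"
      using assms that unfolding ap_defect_def vred_eq_iff by blast
    then have "(s j i - t j i) mod int p
                 = (s 0 i - t 0 i + int j * (s 1 i - t 1 i - (s 0 i - t 0 i))) mod int p"
      unfolding mod_eq_dvd_iff by (simp add: algebra_simps)
    also have "\<dots> = (s 0 i - t 0 i + int j * ((s 1 i - t 1 i - (s 0 i - t 0 i)) mod int p)) mod int p"
      by (metis mod_add_right_eq mod_mult_right_eq)
    finally show ?thesis .
  qed
  then show ?thesis
    unfolding vadd_vscale_eq_vred vsub_eq_vred vred_eq_iff by (simp add: vred_def mod_simps)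
qed

lemma large_family_with_common_ap_defect:
  assumes p: "0 < p" and S: "S \<subseteq> Fpn p n"
    and large: "m * card (Fpn p n) ^ (k - 2) < card S ^ k"
  obtains F where "F \<subseteq> PiE {..<k} (\<lambda>_. S)" and "m < card F"
    and "\<And>s t j. s \<in> F \<Longrightarrow> t \<in> F \<Longrightarrow> j < k \<Longrightarrow> ap_defect p n s j = ap_defect p n t j"
proof -
  define T where "T = PiE {..<k} (\<lambda>_. S)"
  define B where "B = PiE {2..<k} (\<lambda>_. Fpn p n)"
  define defects where "defects t = restrict (ap_defect p n t) {2..<k}" for t
  have "finite S"
    using S finite_Fpn finite_subset by blast
  then have finT: "finite T" and cardT: "card T = card S ^ k"
    by (simp_all add: T_def finite_PiE card_PiE)
  have finB: "finite B" and cardB: "card B = card (Fpn p n) ^ (k - 2)"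
    by (simp_all add: B_def finite_PiE finite_Fpn card_PiE)
  have "B \<noteq> {}"
    using vzero_in_Fpn[OF p] by (auto simp: B_def PiE_eq_empty_iff)
  moreover have "defects \<in> T \<rightarrow> B"
    by (auto simp: defects_def B_def ap_defect_def vred_in_Fpn p)
  ultimately obtain b where "card T \<le> card (defects -` {b} \<inter> T) * card B"
    using pigeonhole_card finT finB by metis
  with large have "m * card B < card (defects -` {b} \<inter> T) * card B"
    unfolding cardT cardB by linarith
  then have card_fiber: "m < card (defects -` {b} \<inter> T)"
    by simp
  have same_defect: "ap_defect p n s j = ap_defect p n t j"
    if "s \<in> defects -` {b} \<inter> T" "t \<in> defects -` {b} \<inter> T" "j < k" for s t j
  proof (cases "j < 2")
    case True
    then have "j = 0 \<or> j = 1" by auto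
    then show ?thesis
      using ap_defect_0 ap_defect_1 by metis
  next
    case False
    with that have "defects s j = defects t j" by simp
    with False \<open>j < k\<close> show ?thesis by (simp add: defects_def)
  qed
  have "defects -` {b} \<inter> T \<subseteq> PiE {..<k} (\<lambda>_. S)"
    unfolding T_def by (rule Int_lower2)
  then show ?thesis
    using card_fiber same_defect by (rule that)
qed

lemma nontrivial_ap_in_diffset:
  assumes p: "0 < p" and S: "S \<subseteq> Fpn p n"
    and F: "F \<subseteq> PiE {..<k} (\<lambda>_. S)"
    and large: "(k + 1) * card (Fpn p n) < card F"
    and same: "\<And>s t j. s \<in> F \<Longrightarrow> t \<in> F \<Longrightarrow> j < k \<Longrightarrow> ap_defect p n s j = ap_defect p n t j"
  shows "\<exists>y d. y \<in> Fpn p n \<and> d \<in> Fpn p n \<and> d \<noteq> vzero \<and>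
           (\<forall>j<k. vadd p n y (vscale p n (int j) d) \<in> diffset p n S - {vzero})"
proof -
  from large obtain s where s: "s \<in> F"
    by (metis card.empty ex_in_conv not_less_zero)
  define first where "first t = vsub p n (s 0) (t 0)" for t :: "nat \<Rightarrow> nat \<Rightarrow> int"
  define step where "step t = vsub p n (vsub p n (s 1) (t 1)) (first t)" for t :: "nat \<Rightarrow> nat \<Rightarrow> int"
  have ap: "vsub p n (s j) (t j) = vadd p n (first t) (vscale p n (int j) (step t))"
    if "t \<in> F" "j < k" for t j
    using vsub_eq_ap_if_ap_defect_eq[OF same[OF s that]] by (simp add: first_def step_def)
  have in_S: "t j \<in> S" if "t \<in> F" "j < k" for t j
    using F that by auto
  have "inj_on (\<lambda>t. (first t, step t)) F"
  proof (rule inj_onI)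
    fix t t' assume t: "t \<in> F" and t': "t' \<in> F" and eq: "(first t, step t) = (first t', step t')"
    show "t = t'"
    proof (rule PiE_ext)
      show "t \<in> PiE {..<k} (\<lambda>_. S)" "t' \<in> PiE {..<k} (\<lambda>_. S)"
        using F t t' by auto
      fix j assume "j \<in> {..<k}"
      then have "j < k" by simp
      then have "vsub p n (s j) (t j) = vsub p n (s j) (t' j)"
        using ap t t' eq by simp
      then show "t j = t' j"
        using vsub_left_cancel in_S S t t' \<open>j < k\<close> by blast
    qed
  qed
  moreover have "finite F"
    using F S finite_Fpn by (meson finite_PiE finite_lessThan finite_subset)
  ultimately have "card ((\<lambda>t. (first t, step t)) ` F) > card (degenerate_aps p n k)"
    using card_degenerate_aps[OF p, of n k] large by (simp add: card_image)
  moreover have "finite (degenerate_aps p n k)"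
    by (rule finite_subset[of _ "Fpn p n \<times> Fpn p n"]) (auto simp: degenerate_aps_def finite_Fpn)
  ultimately obtain t where t: "t \<in> F" and nondegenerate: "(first t, step t) \<notin> degenerate_aps p n k"
    by (metis (no_types, lifting) card_mono image_subset_iff not_le)
  show ?thesis
  proof (intro exI conjI allI impI)
    show "first t \<in> Fpn p n" "step t \<in> Fpn p n"
      by (simp_all add: first_def step_def vsub_in_Fpn p)
    with nondegenerate show "step t \<noteq> vzero"
      by (simp add: degenerate_aps_def)
    fix j assume "j < k"
    have "vsub p n (s j) (t j) \<in> diffset p n S"
      using in_S[OF s \<open>j < k\<close>] in_S[OF t \<open>j < k\<close>] by (auto simp: diffset_def)
    with nondegenerate \<open>first t \<in> Fpn p n\<close> \<open>step t \<in> Fpn p n\<close> \<open>j < k\<close>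
    show "vadd p n (first t) (vscale p n (int j) (step t)) \<in> diffset p n S - {vzero}"
      using ap[OF t \<open>j < k\<close>] by (auto simp: degenerate_aps_def)
  qed
qed

lemma density_power_bound:
  assumes "0 < p" "0 < k"
    and "real p powr (1 + (1 - 1 / real k) * real n) \<le> real N"
  shows "p ^ (k + (k - 1) * n) \<le> N ^ k"
proof -
  have "(1 + (1 - 1 / real k) * real n) * real k = real (k + (k - 1) * n)"
    using assms(2) by (simp add: field_simps of_nat_diff)
  then have "real (p ^ (k + (k - 1) * n)) = (real p powr (1 + (1 - 1 / real k) * real n)) ^ k"
    using assms(1) by (simp add: powr_realpow[symmetric] powr_powr)
  also have "\<dots> \<le> real N ^ k"
    using assms(3) by (intro power_mono) simp_all
  finally show ?thesis
    by (simp only: of_nat_le_iff of_nat_power[symmetric])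
qed

lemma degenerate_bound_times_defect_count_lt:
  assumes "2 \<le> p" "2 \<le> k"
  shows "(k + 1) * p ^ n * (p ^ n) ^ (k - 2) < p ^ (k + (k - 1) * n)"
proof -
  have "k + 1 < 2 ^ k"
    using assms(2) by (induction k rule: dec_induct) simp_all
  also have "\<dots> \<le> p ^ k"
    using assms(1) by (simp add: power_mono)
  finally have "(k + 1) * p ^ ((k - 1) * n) < p ^ k * p ^ ((k - 1) * n)"
    using assms(1) by (intro mult_strict_right_mono) simp_all
  have "p ^ n * (p ^ n) ^ (k - 2) = p ^ ((k - 1) * n)"
    using assms(2) by (simp add: power_add[symmetric] power_mult[symmetric] algebra_simps le_add_diff_inverse)
  then have "(k + 1) * p ^ n * (p ^ n) ^ (k - 2) = (k + 1) * p ^ ((k - 1) * n)"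
    by (simp only: mult.assoc)
  also have "\<dots> < p ^ k * p ^ ((k - 1) * n)"
    by fact
  also have "\<dots> = p ^ (k + (k - 1) * n)"
    by (simp add: power_add)
  finally show ?thesis .
qed

theorem corollaryE:
  fixes p k n :: nat and S :: "(nat \<Rightarrow> int) set"
  assumes "prime p" and "3 \<le> k" and "k \<le> p"
    and "S \<subseteq> Fpn p n"
    and "real (card S) \<ge> real p powr (1 + (1 - 1 / real k) * real n)"
  shows "\<exists>y d. y \<in> Fpn p n \<and> d \<in> Fpn p n \<and> d \<noteq> vzero \<and>
           (\<forall>j<k. vadd p n y (vscale p n (int j) d) \<in> diffset p n S - {vzero})"
proof -
  have p: "2 \<le> p"
    using assms(1) by (rule prime_ge_2_nat)
  then have p0: "0 < p"
    by simp
  have "(k + 1) * card (Fpn p n) * card (Fpn p n) ^ (k - 2) \<le> (k + 1) * p ^ n * (p ^ n) ^ (k - 2)"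
    using card_Fpn_le by (intro mult_mono power_mono) simp_all
  also have "\<dots> < p ^ (k + (k - 1) * n)"
    using p assms(2) by (intro degenerate_bound_times_defect_count_lt) simp_all
  also have "\<dots> \<le> card S ^ k"
    using p assms(2,5) by (intro density_power_bound) simp_all
  finally have "(k + 1) * card (Fpn p n) * card (Fpn p n) ^ (k - 2) < card S ^ k" .
  then obtain F where "F \<subseteq> PiE {..<k} (\<lambda>_. S)" and "(k + 1) * card (Fpn p n) < card F"
    and "\<And>s t j. s \<in> F \<Longrightarrow> t \<in> F \<Longrightarrow> j < k \<Longrightarrow> ap_defect p n s j = ap_defect p n t j"
    using large_family_with_common_ap_defect[OF p0 assms(4)] by blast
  then show ?thesis
    by (rule nontrivial_ap_in_diffset[OF p0 assms(4)])
qed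

end
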